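(* Let $1\le i,m\le n$. Then $\mathsf{L}^i_n=\langle\mathbf{ŁV}_{n+1},F_{i/n}\rangle$ is maximal with respect to $\mathsf{L}^{i/n}_m=\langle\mathbf{ŁV}_{m+1},F_{i/n}\cap\mathrm{ŁV}_{m+1}\rangle$ if and only if there are a prime number $q$ and an integer $k\ge1$ such that $n=q^k$ and $m=q^{k-1}$.
   Context: $\mathbf{ŁV}_{n+1}=(\{0,\frac1n,\dots,\frac{n-1}n,1\},\neg,\to)$ with $\neg x=1-x$, $x\to y=\min\{1,1-x+y\}$; $\mathbf{ŁV}_{m+1}$ is a subalgebra of $\mathbf{ŁV}_{n+1}$ iff $m\mid n$. $F_{i/n}=\{x\in\mathrm{ŁV}_{n+1}:x\ge i/n\}$. Matrix logic consequence: $\Gamma\vdash\varphi$ iff every evaluation sending $\Gamma$ into the designated set sends $\varphi$ into it. $L_1$ is maximal w.r.t. $L_2$ if ${\vdash_{L_1}}\subsetneq{\vdash_{L_2}}$ and for every formula $\varphi$ with $\vdash_{L_2}\varphi$ but $\nvdash_{L_1}\varphi$, the logic obtained from $L_1$ by adding all substitution instances of $\varphi$ as axioms coincides with $L_2$. *)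

theory Defs
  imports Complex_Main "HOL-Computational_Algebra.Primes"
begin

datatype fm = Var nat | Neg fm | Imp fm fm

fun subst :: "(nat \<Rightarrow> fm) \<Rightarrow> fm \<Rightarrow> fm" where
  "subst \<sigma> (Var x) = \<sigma> x"
| "subst \<sigma> (Neg a) = Neg (subst \<sigma> a)"
| "subst \<sigma> (Imp a b) = Imp (subst \<sigma> a) (subst \<sigma> b)"

fun eval :: "(nat \<Rightarrow> rat) \<Rightarrow> fm \<Rightarrow> rat" where
  "eval e (Var x) = e x"
| "eval e (Neg a) = 1 - eval e a"
| "eval e (Imp a b) = min 1 (1 - eval e a + eval e b)"

text \<open>Universe of the algebra LV_{n+1}: {0, 1/n, ..., 1}.\<close>
definition LV :: "nat \<Rightarrow> rat set" where
  "LV n = {of_nat k / of_nat n | k. k \<le> n}"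

definition Filt :: "nat \<Rightarrow> nat \<Rightarrow> rat set" where
  "Filt n i = {x \<in> LV n. x \<ge> of_nat i / of_nat n}"

definition mcons :: "rat set \<Rightarrow> rat set \<Rightarrow> fm set \<Rightarrow> fm \<Rightarrow> bool" where
  "mcons A D \<Gamma> \<phi> \<longleftrightarrow>
     (\<forall>e. (\<forall>x. e x \<in> A) \<longrightarrow> (\<forall>\<gamma>\<in>\<Gamma>. eval e \<gamma> \<in> D) \<longrightarrow> eval e \<phi> \<in> D)"

definition ax_ext :: "(fm set \<Rightarrow> fm \<Rightarrow> bool) \<Rightarrow> fm \<Rightarrow> fm set \<Rightarrow> fm \<Rightarrow> bool" where
  "ax_ext C \<phi> \<Gamma> \<psi> \<longleftrightarrow> C (\<Gamma> \<union> range (\<lambda>\<sigma>. subst \<sigma> \<phi>)) \<psi>"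

definition maximal_wrt :: "(fm set \<Rightarrow> fm \<Rightarrow> bool) \<Rightarrow> (fm set \<Rightarrow> fm \<Rightarrow> bool) \<Rightarrow> bool" where
  "maximal_wrt C1 C2 \<longleftrightarrow>
     (\<forall>\<Gamma> \<phi>. C1 \<Gamma> \<phi> \<longrightarrow> C2 \<Gamma> \<phi>) \<and> \<not> (\<forall>\<Gamma> \<phi>. C2 \<Gamma> \<phi> \<longrightarrow> C1 \<Gamma> \<phi>) \<and>
     (\<forall>\<phi>. C2 {} \<phi> \<and> \<not> C1 {} \<phi> \<longrightarrow> ax_ext C1 \<phi> = C2)"

end

theory Submission
  imports Defs
begin

text \<open>On \<open>LV n\<close> the formula "\<open>x\<^sub>0 \<noteq> 1/d\<close>" (for \<open>d\<close> dividing \<open>n\<close>) is definable, and it is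
  a tautology of the matrix on \<open>LV m\<close> exactly when \<open>d\<close> does not divide \<open>m\<close>. Comparing such
  formulas, maximality forces \<open>m\<close> to be a proper divisor of \<open>n\<close> that is divisible by every
  other proper divisor, i.e. \<open>n = q^k\<close> and \<open>m = q^(k-1)\<close>. Conversely, in that case
  every element of \<open>LV n\<close> outside \<open>LV m\<close> is \<open>a/n\<close> with \<open>a\<close> coprime to \<open>n\<close>, so it generates
  all of \<open>LV n\<close> by terms; hence the instances of any axiom valid in \<open>LV m\<close> but refuted in
  \<open>LV n\<close> exclude such values and cut the models down to exactly those in \<open>LV m\<close>.\<close>

definition trunc :: "rat \<Rightarrow> rat" where
  "trunc y = max 0 (min 1 y)"

definition fm_top :: "nat \<Rightarrow> fm" where
  "fm_top v = Imp (Var v) (Var v)"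

definition fm_oplus :: "fm \<Rightarrow> fm \<Rightarrow> fm" where
  "fm_oplus a b = Imp (Neg a) b"

definition fm_otimes :: "fm \<Rightarrow> fm \<Rightarrow> fm" where
  "fm_otimes a b = Neg (Imp a (Neg b))"

lemma eval_fm_oplus: "eval e (fm_oplus a b) = min 1 (eval e a + eval e b)"
  by (simp add: fm_oplus_def)

lemma eval_fm_otimes: "eval e (fm_otimes a b) = max 0 (eval e a + eval e b - 1)"
  by (simp add: fm_otimes_def min_def max_def)

text \<open>\<open>lin_fm v a b\<close> defines \<open>trunc (a x\<^sub>v + b)\<close>, using
  \<open>trunc (a x + b) \<oplus> (x \<odot> trunc (a x + b + 1)) = trunc ((a + 1) x + b)\<close> for \<open>x \<in> [0,1]\<close>.\<close>
fun lin_fm :: "nat \<Rightarrow> nat \<Rightarrow> int \<Rightarrow> fm" where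
  "lin_fm v 0 b = (if b \<ge> 1 then fm_top v else Neg (fm_top v))"
| "lin_fm v (Suc a) b = fm_oplus (lin_fm v a b) (fm_otimes (Var v) (lin_fm v a (b + 1)))"

lemma eval_lin_fm:
  assumes "0 \<le> e v" "e v \<le> 1"
  shows "eval e (lin_fm v a b) = trunc (of_nat a * e v + of_int b)"
  using assms
proof (induction a arbitrary: b)
  case 0
  then show ?case by (auto simp: fm_top_def trunc_def)
next
  case (Suc a)
  then show ?case
    using Suc.IH[of b] Suc.IH[of "b + 1"]
    by (simp add: eval_fm_oplus eval_fm_otimes trunc_def algebra_simps min_def max_def)
qed

lemma LV_iff: "x \<in> LV N \<longleftrightarrow> (\<exists>k \<le> N. x = of_nat k / of_nat N)"
  by (auto simp: LV_def)

lemma LV_bounds: "x \<in> LV N \<Longrightarrow> 0 \<le> x \<and> x \<le> 1"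
  by (auto simp: LV_iff divide_le_eq)

lemma one_in_LV: "0 < N \<Longrightarrow> 1 \<in> LV N"
  by (force simp: LV_iff)

definition neq_fm :: "nat \<Rightarrow> nat \<Rightarrow> int \<Rightarrow> fm" where
  "neq_fm v N c = fm_oplus (lin_fm v N (- c)) (Neg (lin_fm v N (1 - c)))"

lemma eval_neq_fm:
  assumes "0 < N" "e v \<in> LV N"
  shows "eval e (neq_fm v N c) = (if e v = of_int c / of_nat N then 0 else 1)"
proof -
  obtain k where k: "k \<le> N" "e v = of_nat k / of_nat N"
    using assms(2) by (auto simp: LV_iff)
  have scaled: "of_nat N * e v = of_int (int k)"
    using k assms(1) by simp
  have "e v = of_int c / of_nat N \<longleftrightarrow> int k = c"
    using k assms(1) by (auto simp: field_simps)
  moreover have "eval e (neq_fm v N c)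
      = min 1 (trunc (of_int (int k - c)) + (1 - trunc (of_int (int k - c + 1))))"
    using eval_lin_fm[of e v] LV_bounds[OF assms(2)] scaled
    by (simp add: neq_fm_def eval_fm_oplus algebra_simps)
  moreover have "\<dots> = (if int k = c then 0 else 1)"
    by (cases "int k - c \<ge> 1"; cases "int k = c") (simp_all add: trunc_def)
  ultimately show ?thesis by simp
qed

lemma LV_neg_closed:
  assumes "0 < N" "x \<in> LV N"
  shows "1 - x \<in> LV N"
proof -
  obtain a where a: "a \<le> N" "x = of_nat a / of_nat N"
    using assms(2) by (auto simp: LV_iff)
  then have "1 - x = of_nat (N - a) / of_nat N"
    using assms(1) by (simp add: field_simps of_nat_diff)
  then show ?thesis unfolding LV_iff by (intro exI[of _ "N - a"]) auto
qed

lemma LV_imp_closed: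
  assumes "0 < N" "x \<in> LV N" "y \<in> LV N"
  shows "min 1 (1 - x + y) \<in> LV N"
proof (cases "x \<le> y")
  case True
  then show ?thesis using one_in_LV[OF assms(1)] by simp
next
  case False
  obtain a b where ab: "a \<le> N" "x = of_nat a / of_nat N" "b \<le> N" "y = of_nat b / of_nat N"
    using assms(2,3) by (auto simp: LV_iff)
  with False assms(1) have "b < a"
    by (auto simp: divide_le_cancel)
  with ab assms(1) have "min 1 (1 - x + y) = of_nat (N - a + b) / of_nat N"
    using False by (simp add: field_simps of_nat_diff)
  moreover have "N - a + b \<le> N" using \<open>b < a\<close> ab by simp
  ultimately show ?thesis by (auto simp: LV_iff)
qed

definition eval_closed :: "rat set \<Rightarrow> bool" where
  "eval_closed A \<longleftrightarrow> (\<forall>e \<phi>. (\<forall>x. e x \<in> A) \<longrightarrow> eval e \<phi> \<in> A)"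

lemma eval_closed_LV: "0 < N \<Longrightarrow> eval_closed (LV N)"
proof -
  assume "0 < N"
  have "eval e \<phi> \<in> LV N" if "\<forall>x. e x \<in> LV N" for e \<phi>
    using that by (induction \<phi>) (auto intro: LV_neg_closed LV_imp_closed \<open>0 < N\<close>)
  then show ?thesis by (simp add: eval_closed_def)
qed

lemma LV_mono:
  assumes "M dvd N" "0 < N"
  shows "LV M \<subseteq> LV N"
proof
  fix x assume "x \<in> LV M"
  then obtain a where a: "a \<le> M" "x = of_nat a / of_nat M" by (auto simp: LV_iff)
  obtain r where r: "N = M * r" using assms(1) by auto
  with assms(2) have "0 < r" "0 < M" by auto
  then have "x = of_nat (a * r) / of_nat N" using a r by simp
  moreover have "a * r \<le> N" using a r by simp
  ultimately show "x \<in> LV N" by (auto simp: LV_iff)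
qed

lemma inverse_in_LV_iff:
  assumes "0 < d" "0 < N"
  shows "1 / of_nat d \<in> LV N \<longleftrightarrow> d dvd N"
proof
  assume "1 / of_nat d \<in> LV N"
  then obtain a where "(1::rat) / of_nat d = of_nat a / of_nat N"
    by (auto simp: LV_iff)
  then have "(of_nat N :: rat) = of_nat (a * d)"
    using assms by (simp add: field_simps)
  then show "d dvd N" by (metis dvd_triv_right of_nat_eq_iff)
next
  assume "d dvd N"
  moreover have "1 / of_nat d \<in> LV d"
    using assms(1) by (force simp: LV_iff)
  ultimately show "1 / of_nat d \<in> LV N"
    using LV_mono assms(2) by blast
qed

lemma eval_subst: "eval e (subst \<sigma> \<phi>) = eval (\<lambda>w. eval e (\<sigma> w)) \<phi>"
  by (induction \<phi>) auto

text \<open>If \<open>x\<^sub>v\<close> takes the value \<open>a/n\<close> with \<open>a\<close> coprime to \<open>n\<close>, Bezout's \<open>a X = n Y + 1\<close>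
  gives \<open>c/n = trunc (X c \<cdot> a/n - Y c)\<close>, so every element of \<open>LV n\<close> is the value of a
  term in \<open>x\<^sub>v\<close>.\<close>
lemma LV_valuation_by_subst:
  assumes "0 < a" "a \<le> n" "coprime a n" "e v = of_nat a / of_nat n" "\<forall>w. e' w \<in> LV n"
  shows "\<exists>\<sigma>. (\<lambda>w. eval e (\<sigma> w)) = e'"
proof -
  obtain X Y where XY: "a * X = n * Y + 1"
    using bezout_nat[of a n] assms(1,3) by auto
  have "n > 0" using assms(1,2) by simp
  have ev: "0 \<le> e v" "e v \<le> 1" using assms(1,2,4) by (auto simp: divide_le_eq)
  have "\<exists>t. eval e t = e' w" for w
  proof -
    obtain c where c: "c \<le> n" "e' w = of_nat c / of_nat n"
      using assms(5) by (auto simp: LV_iff)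
    have XY': "(of_nat (a * X) :: rat) = of_nat n * of_nat Y + 1"
      using arg_cong[OF XY, of "of_nat :: nat \<Rightarrow> rat"] by simp
    have "of_nat (X * c) * e v = (of_nat (a * X) * of_nat c / of_nat n :: rat)"
      using assms(4) by simp
    also have "\<dots> = of_nat (Y * c) + e' w"
      unfolding XY' c(2) using \<open>n > 0\<close> by (simp add: add_divide_distrib distrib_right)
    finally have "eval e (lin_fm v (X * c) (- int (Y * c))) = trunc (e' w)"
      by (simp add: eval_lin_fm[of e v, OF ev])
    also have "\<dots> = e' w"
      using LV_bounds[of "e' w" n] assms(5) by (simp add: trunc_def)
    finally show ?thesis ..
  qed
  then obtain \<sigma> where "\<forall>w. eval e (\<sigma> w) = e' w"
    by (metis choice)
  then show ?thesis by auto
qed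

definition avoid_inverse :: "nat \<Rightarrow> nat \<Rightarrow> fm" where
  "avoid_inverse N d = neq_fm 0 N (int (N div d))"

lemma eval_avoid_inverse:
  assumes "0 < d" "d dvd N" "0 < N" "e 0 \<in> LV N"
  shows "eval e (avoid_inverse N d) = (if e 0 = 1 / of_nat d then 0 else 1)"
proof -
  obtain k where "N = d * k" using assms(2) ..
  with assms(3) have "(of_nat (N div d) / of_nat N :: rat) = 1 / of_nat d"
    by simp
  then show ?thesis
    using eval_neq_fm[of N e 0, OF assms(3,4)] by (simp add: avoid_inverse_def)
qed

lemma mcons_LV_avoid_inverse:
  assumes "0 < d" "d dvd N" "M dvd N" "0 < N" "\<not> d dvd M" "1 \<in> D"
  shows "mcons (LV M) D {} (avoid_inverse N d)"
  unfolding mcons_def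
proof (intro allI impI)
  fix e :: "nat \<Rightarrow> rat"
  assume e: "\<forall>x. e x \<in> LV M"
  have "0 < M" using assms(3,4) by (cases M) auto
  then have "e 0 \<noteq> 1 / of_nat d"
    using e inverse_in_LV_iff[OF assms(1)] assms(5) by metis
  moreover have "e 0 \<in> LV N"
    using e LV_mono[OF assms(3,4)] by blast
  ultimately show "eval e (avoid_inverse N d) \<in> D"
    using eval_avoid_inverse[OF assms(1,2,4)] assms(6) by simp
qed

lemma not_mcons_LV_avoid_inverse:
  assumes "0 < d" "d dvd N" "0 < N" "d dvd M" "0 < M" "0 \<notin> D"
  shows "\<not> mcons (LV M) D {} (avoid_inverse N d)"
proof
  let ?e = "\<lambda>_. 1 / of_nat d :: rat"
  assume "mcons (LV M) D {} (avoid_inverse N d)"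
  moreover have "\<forall>x. ?e x \<in> LV M"
    using inverse_in_LV_iff[OF assms(1,5)] assms(4) by simp
  ultimately have "eval ?e (avoid_inverse N d) \<in> D"
    by (simp add: mcons_def)
  moreover have "?e 0 \<in> LV N"
    using inverse_in_LV_iff[OF assms(1,3)] assms(2) by simp
  ultimately show False
    using eval_avoid_inverse[OF assms(1-3)] assms(6) by simp
qed

lemma mcons_inter_closed:
  assumes "eval_closed A"
  shows "mcons A (D \<inter> A) = mcons A D"
  using assms by (auto simp: mcons_def eval_closed_def fun_eq_iff)

lemma mcons_submatrix:
  assumes "eval_closed A" "A \<subseteq> B" "mcons B D \<Gamma> \<phi>"
  shows "mcons A (D \<inter> A) \<Gamma> \<phi>"
  using assms by (auto simp: mcons_def eval_closed_def subset_iff)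

lemma mcons_tautology_subst:
  assumes "mcons A D {} \<phi>" "eval_closed A" "\<forall>x. e x \<in> A"
  shows "eval e (subst \<sigma> \<phi>) \<in> D"
  using assms by (simp add: mcons_def eval_closed_def eval_subst)

lemma ax_ext_submatrix:
  assumes "eval_closed A" "A \<subseteq> B" "mcons A (D \<inter> A) {} \<phi>" "ax_ext (mcons B D) \<phi> \<Gamma> \<psi>"
  shows "mcons A (D \<inter> A) \<Gamma> \<psi>"
  unfolding mcons_def
proof (intro allI impI)
  fix e assume e: "\<forall>x. e x \<in> A" and \<Gamma>: "\<forall>\<gamma>\<in>\<Gamma>. eval e \<gamma> \<in> D \<inter> A"
  have "\<forall>\<gamma>\<in>\<Gamma> \<union> range (\<lambda>\<sigma>. subst \<sigma> \<phi>). eval e \<gamma> \<in> D"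
    using \<Gamma> mcons_tautology_subst[OF assms(3,1) e] by auto
  then have "eval e \<psi> \<in> D"
    using assms(2,4) e unfolding ax_ext_def mcons_def by blast
  then show "eval e \<psi> \<in> D \<inter> A"
    using assms(1) e by (simp add: eval_closed_def)
qed

lemma submatrix_ax_ext:
  assumes "eval_closed A" "mcons A (D \<inter> A) \<Gamma> \<psi>"
    and confined: "\<And>e. \<forall>x. e x \<in> B \<Longrightarrow> \<forall>\<sigma>. eval e (subst \<sigma> \<phi>) \<in> D \<Longrightarrow> \<forall>x. e x \<in> A"
  shows "ax_ext (mcons B D) \<phi> \<Gamma> \<psi>"
  unfolding ax_ext_def mcons_def
proof (intro allI impI)
  fix e assume "\<forall>x. e x \<in> B" and sat: "\<forall>\<gamma>\<in>\<Gamma> \<union> range (\<lambda>\<sigma>. subst \<sigma> \<phi>). eval e \<gamma> \<in> D"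
  then have "\<forall>x. e x \<in> A" using confined by blast
  with sat assms(1,2) show "eval e \<psi> \<in> D"
    unfolding mcons_def eval_closed_def by blast
qed

lemma LV_prime_power_confined:
  assumes "prime q" "\<not> mcons (LV (q ^ Suc k)) D {} \<phi>"
    and e: "\<forall>x. e x \<in> LV (q ^ Suc k)" "\<forall>\<sigma>. eval e (subst \<sigma> \<phi>) \<in> D"
  shows "e v \<in> LV (q ^ k)"
proof (rule ccontr)
  assume notin: "e v \<notin> LV (q ^ k)"
  obtain a where a: "a \<le> q ^ Suc k" "e v = of_nat a / of_nat (q ^ Suc k)"
    using e(1) by (auto simp: LV_iff)
  have "\<not> q dvd a"
  proof
    assume "q dvd a"
    then obtain b where "a = q * b" ..
    with a assms(1) have "b \<le> q ^ k" "e v = of_nat b / of_nat (q ^ k)"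
      by (auto simp: prime_gt_0_nat)
    with notin show False by (auto simp: LV_iff)
  qed
  then have "0 < a" "coprime a (q ^ Suc k)"
    using prime_imp_coprime[OF assms(1)] by (auto intro: gr0I simp: coprime_commute)
  obtain e' where e': "\<forall>x. e' x \<in> LV (q ^ Suc k)" "eval e' \<phi> \<notin> D"
    using assms(2) by (auto simp: mcons_def)
  obtain \<sigma> where "(\<lambda>w. eval e (\<sigma> w)) = e'"
    using LV_valuation_by_subst[where e = e and v = v, OF \<open>0 < a\<close> a(1) \<open>coprime a _\<close> a(2) e'(1)] ..
  then show False
    using e(2) e'(2) eval_subst by metis
qed

lemma prime_power_if_proper_divisors_dvd:
  fixes m n :: nat
  assumes "0 < m" "m dvd n" "m < n" and proper: "\<And>d. d dvd n \<Longrightarrow> d < n \<Longrightarrow> d dvd m"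
  shows "\<exists>q k. prime q \<and> k \<ge> 1 \<and> n = q ^ k \<and> m = q ^ (k - 1)"
proof -
  obtain r where r: "n = m * r" using assms(2) ..
  with assms(1,3) have "r \<noteq> 1" by auto
  then obtain q where q: "prime q" "q dvd r" using prime_factor_nat by blast
  from q(2) obtain s where s: "r = q * s" ..
  have "0 < s" using r s assms(1,3) by (cases s) auto
  then have "m * s < n"
    using r s prime_gt_1_nat[OF q(1)] assms(1) by simp
  then have "m * s dvd m * 1"
    using proper[of "m * s"] r s by simp
  then have "s = 1" using assms(1) by simp
  then have nq: "n = m * q" using r s by simp
  define k where "k = multiplicity q n"
  have "n = q ^ k"
  proof (rule ccontr)
    assume "n \<noteq> q ^ k"
    moreover have "q ^ k dvd n" by (simp add: k_def multiplicity_dvd)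
    moreover have "q ^ k \<le> n"
      using dvd_imp_le[OF \<open>q ^ k dvd n\<close>] assms(3) by simp
    ultimately have "q ^ k < n" by simp
    then have "q ^ k dvd m"
      using proper \<open>q ^ k dvd n\<close> by blast
    then have "q ^ Suc k dvd n" by (simp add: nq mult.commute)
    moreover have "\<not> is_unit q" using q(1) not_prime_unit by blast
    ultimately show False
      using power_dvd_iff_le_multiplicity[of n q "Suc k"] assms(3) by (simp add: k_def)
  qed
  moreover from this have "k \<ge> 1" using assms(1,3) by (cases k) auto
  moreover have "m = q ^ (k - 1)"
  proof -
    have "m * q = q ^ (k - 1) * q"
      using power_minus_mult[of k q] \<open>n = q ^ k\<close> \<open>k \<ge> 1\<close> nq by simp
    then show ?thesis using prime_gt_0_nat[OF q(1)] by simp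
  qed
  ultimately show ?thesis using q(1) by blast
qed

lemma dvd_if_mcons_LV_le:
  assumes "0 < m" "0 < n" "1 \<in> D" "0 \<notin> D'"
    and le: "\<And>\<phi>. mcons (LV n) D {} \<phi> \<Longrightarrow> mcons (LV m) D' {} \<phi>"
  shows "m dvd n"
proof (rule ccontr)
  assume "\<not> m dvd n"
  then have "mcons (LV n) D {} (avoid_inverse (m * n) m)"
    using mcons_LV_avoid_inverse assms(1-3) by simp
  then have "mcons (LV m) D' {} (avoid_inverse (m * n) m)"
    by (rule le)
  then show False
    using not_mcons_LV_avoid_inverse[of m "m * n" m] assms(1,2,4) by simp
qed

lemma proper_divisor_dvd_if_maximal_wrt:
  assumes max: "maximal_wrt (mcons (LV n) D) (mcons (LV m) (D \<inter> LV m))"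
    and "0 < m" "m dvd n" "m < n" "1 \<in> D" "0 \<notin> D" "d dvd n" "d < n"
  shows "d dvd m"
proof (rule ccontr)
  assume "\<not> d dvd m"
  have "0 < d" "0 < n" using assms(4,7,8) by (auto intro: gr0I)
  have "\<not> n dvd m" using assms(2,4) by (auto dest: dvd_imp_le)
  then have "mcons (LV m) (D \<inter> LV m) {} (avoid_inverse n n)"
    using mcons_LV_avoid_inverse assms(3,5) \<open>0 < n\<close> one_in_LV[OF assms(2)] by simp
  moreover have "\<not> mcons (LV n) D {} (avoid_inverse n n)"
    using not_mcons_LV_avoid_inverse \<open>0 < n\<close> assms(6) by simp
  ultimately have ax: "ax_ext (mcons (LV n) D) (avoid_inverse n n) = mcons (LV m) (D \<inter> LV m)"
    using max by (simp add: maximal_wrt_def)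
  have "mcons (LV m) (D \<inter> LV m) {} (avoid_inverse n d)"
    using mcons_LV_avoid_inverse \<open>0 < d\<close> assms(3,5,7) \<open>0 < n\<close> \<open>\<not> d dvd m\<close>
      one_in_LV[OF assms(2)] by simp
  then have ax_d: "ax_ext (mcons (LV n) D) (avoid_inverse n n) {} (avoid_inverse n d)"
    by (simp add: ax)
  text \<open>Substitution instances stay in the subalgebra \<open>LV d\<close>, which misses \<open>1/n\<close> but contains \<open>1/d\<close>.\<close>
  let ?e = "\<lambda>_. 1 / of_nat d :: rat"
  have e_d: "\<forall>x. ?e x \<in> LV d" and e_n: "\<forall>x. ?e x \<in> LV n"
    using inverse_in_LV_iff \<open>0 < d\<close> \<open>0 < n\<close> assms(7) by auto
  have "\<not> n dvd d" using assms(8) \<open>0 < d\<close> by (auto dest: dvd_imp_le)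
  then have taut_d: "mcons (LV d) D {} (avoid_inverse n n)"
    using mcons_LV_avoid_inverse \<open>0 < n\<close> assms(5,7) by simp
  have "\<forall>\<sigma>. eval ?e (subst \<sigma> (avoid_inverse n n)) \<in> D"
    using mcons_tautology_subst[OF taut_d eval_closed_LV[OF \<open>0 < d\<close>] e_d] by blast
  then have "eval ?e (avoid_inverse n d) \<in> D"
    using ax_d e_n unfolding ax_ext_def mcons_def by auto
  then show False
    using eval_avoid_inverse \<open>0 < d\<close> \<open>0 < n\<close> assms(6,7) e_n by simp
qed

lemma maximal_wrt_LV_prime_power:
  assumes "prime q" "n = q ^ Suc k" "m = q ^ k" "1 \<in> D" "0 \<notin> D"
  shows "maximal_wrt (mcons (LV n) D) (mcons (LV m) (D \<inter> LV m))"
proof -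
  have "0 < m" "m < n" "m dvd n"
    using prime_gt_1_nat[OF assms(1)] assms(2,3) by simp_all
  then have "0 < n" by simp
  have closed: "eval_closed (LV m)" and sub: "LV m \<subseteq> LV n"
    using eval_closed_LV[OF \<open>0 < m\<close>] LV_mono[OF \<open>m dvd n\<close> \<open>0 < n\<close>] .
  have le: "mcons (LV m) (D \<inter> LV m) \<Gamma> \<phi>" if "mcons (LV n) D \<Gamma> \<phi>" for \<Gamma> \<phi>
    using mcons_submatrix[OF closed sub that] .
  have "\<not> n dvd m" using \<open>0 < m\<close> \<open>m < n\<close> by (auto dest: dvd_imp_le)
  then have "mcons (LV m) (D \<inter> LV m) {} (avoid_inverse n n)"
    using mcons_LV_avoid_inverse[OF \<open>0 < n\<close> dvd_refl \<open>m dvd n\<close> \<open>0 < n\<close>]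
      assms(4) one_in_LV[OF \<open>0 < m\<close>] by simp
  moreover have "\<not> mcons (LV n) D {} (avoid_inverse n n)"
    using not_mcons_LV_avoid_inverse[OF \<open>0 < n\<close> dvd_refl \<open>0 < n\<close> dvd_refl \<open>0 < n\<close> assms(5)] .
  ultimately have strict: "\<not> (\<forall>\<Gamma> \<phi>. mcons (LV m) (D \<inter> LV m) \<Gamma> \<phi> \<longrightarrow> mcons (LV n) D \<Gamma> \<phi>)"
    by blast
  have "ax_ext (mcons (LV n) D) \<phi> = mcons (LV m) (D \<inter> LV m)"
    if "mcons (LV m) (D \<inter> LV m) {} \<phi>" "\<not> mcons (LV n) D {} \<phi>" for \<phi>
  proof (intro ext iffI)
    fix \<Gamma> \<psi>
    show "ax_ext (mcons (LV n) D) \<phi> \<Gamma> \<psi> \<Longrightarrow> mcons (LV m) (D \<inter> LV m) \<Gamma> \<psi>"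
      using ax_ext_submatrix[OF closed sub that(1)] .
    have "\<forall>x. e x \<in> LV m"
      if "\<forall>x. e x \<in> LV n" "\<forall>\<sigma>. eval e (subst \<sigma> \<phi>) \<in> D" for e
      using LV_prime_power_confined[OF assms(1)] \<open>\<not> mcons (LV n) D {} \<phi>\<close> that assms(2,3)
      by blast
    then show "mcons (LV m) (D \<inter> LV m) \<Gamma> \<psi> \<Longrightarrow> ax_ext (mcons (LV n) D) \<phi> \<Gamma> \<psi>"
      using submatrix_ax_ext[OF closed] by blast
  qed
  with le strict show ?thesis
    by (auto simp: maximal_wrt_def)
qed

lemma prime_power_if_maximal_wrt_LV:
  assumes max: "maximal_wrt (mcons (LV n) D) (mcons (LV m) (D \<inter> LV m))"
    and "0 < m" "0 < n" "1 \<in> D" "0 \<notin> D"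
  shows "\<exists>q k. prime q \<and> k \<ge> 1 \<and> n = q ^ k \<and> m = q ^ (k - 1)"
proof (rule prime_power_if_proper_divisors_dvd)
  show "0 < m" by fact
  show "m dvd n"
    using dvd_if_mcons_LV_le[OF assms(2-4)] max assms(5) by (auto simp: maximal_wrt_def)
  have "m \<noteq> n"
  proof
    assume "m = n"
    then have "mcons (LV m) (D \<inter> LV m) = mcons (LV n) D"
      using mcons_inter_closed[OF eval_closed_LV[OF assms(3)]] by simp
    with max show False by (simp add: maximal_wrt_def)
  qed
  then show "m < n"
    using dvd_imp_le[OF \<open>m dvd n\<close> assms(3)] by simp
  show "d dvd m" if "d dvd n" "d < n" for d
    using proper_divisor_dvd_if_maximal_wrt[OF max assms(2) \<open>m dvd n\<close> \<open>m < n\<close> assms(4,5) that] .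
qed

theorem corollary5p3:
  fixes i m n :: nat
  assumes "1 \<le> i" "i \<le> n" "1 \<le> m" "m \<le> n"
  shows "maximal_wrt (mcons (LV n) (Filt n i)) (mcons (LV m) (Filt n i \<inter> LV m))
     \<longleftrightarrow> (\<exists>q k. prime q \<and> k \<ge> 1 \<and> n = q ^ k \<and> m = q ^ (k - 1))"
proof
  have "0 < n" "0 < m" using assms by auto
  moreover have "1 \<in> Filt n i" "0 \<notin> Filt n i"
    using assms(1,2) \<open>0 < n\<close> one_in_LV by (auto simp: Filt_def divide_le_eq not_le)
  ultimately show "maximal_wrt (mcons (LV n) (Filt n i)) (mcons (LV m) (Filt n i \<inter> LV m))
      \<Longrightarrow> \<exists>q k. prime q \<and> k \<ge> 1 \<and> n = q ^ k \<and> m = q ^ (k - 1)"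
    using prime_power_if_maximal_wrt_LV by blast
  assume "\<exists>q k. prime q \<and> k \<ge> 1 \<and> n = q ^ k \<and> m = q ^ (k - 1)"
  then obtain q k where "prime q" "k \<ge> 1" "n = q ^ Suc (k - 1)" "m = q ^ (k - 1)"
    by auto
  then show "maximal_wrt (mcons (LV n) (Filt n i)) (mcons (LV m) (Filt n i \<inter> LV m))"
    using maximal_wrt_LV_prime_power \<open>1 \<in> Filt n i\<close> \<open>0 \<notin> Filt n i\<close> by blast
qed

end
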